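(* There is an absolute constant $C>0$ such that the following holds. Let $n\ge 1$, $r\ge 1$, $\delta>0$ with $\delta n\ge 1$, and $\hat\epsilon>0$. Let $P_\tau$ be a set of $n_\tau\le n$ points in $\mathbb{R}^2$ in general position, partitioned into classes ("cells") each of size at most $n/r^2$; for $p\in P_\tau$ let $P_{\mu(p)}$ be the class of $p$. For each $p\in P_\tau$, list the $n_\tau-1$ other points of $P_\tau$ in clockwise angular order around $p$ and split this list into consecutive blocks ${\cal E}_0,\dots,{\cal E}_{z-1}$, each but the last containing exactly $\lceil 2\delta n\rceil$ points and the last containing at most $\lceil 2\delta n\rceil$ points. If $z\ge 3$, define the $z$ sectors ${\cal W}_j(p)={\cal E}_j\cup{\cal E}_{j+1}\cup{\cal E}_{j+2}$ (indices modulo $z$), $0\le j\le z-1$; if $z<3$, define a single sector ${\cal W}_0(p)=P_\tau\setminus\{p\}$. Call a sector ${\cal W}_j(p)$ rich if it contains at least $\hat\epsilon n/10$ points of $P_{\mu(p)}\setminus\{p\}$. Let $\Pi$ be the set of pairs $\{p,q\}\subseteq P_\tau$ such that $q$ lies in a rich sector of $p$ or $p$ lies in a rich sector of $q$. Then $$|\Pi|\le C\,\frac{\delta n^2}{r^2\hat\epsilon}.$$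
   Context: General position: no three points collinear and no two on a common vertical line. *)

theory Defs
  imports "HOL-Analysis.Analysis"
begin

type_synonym pt = "real \<times> real"

definition general_position :: "pt set \<Rightarrow> bool" where
  "general_position P \<longleftrightarrow>
     (\<forall>a\<in>P. \<forall>b\<in>P. \<forall>c\<in>P. a \<noteq> b \<and> b \<noteq> c \<and> a \<noteq> c \<longrightarrow> \<not> collinear {a, b, c}) \<and>
     (\<forall>a\<in>P. \<forall>b\<in>P. a \<noteq> b \<longrightarrow> fst a \<noteq> fst b)"

definition dir_angle :: "pt \<Rightarrow> pt \<Rightarrow> real" where
  "dir_angle p q = Arg (Complex (fst q - fst p) (snd q - snd p))"

text \<open>Clockwise angle, in [0, 2 pi), swept from the starting ray of angle th0 to the direction p->q.\<close>
definition cw_angle :: "real \<Rightarrow> pt \<Rightarrow> pt \<Rightarrow> real" where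
  "cw_angle th0 p q = 2 * pi * frac ((th0 - dir_angle p q) / (2 * pi))"

definition clockwise_list :: "pt set \<Rightarrow> pt \<Rightarrow> pt list \<Rightarrow> bool" where
  "clockwise_list P p L \<longleftrightarrow> distinct L \<and> set L = P - {p} \<and>
     (\<exists>th0. sorted_wrt (\<lambda>a b. cw_angle th0 p a < cw_angle th0 p b) L)"

definition blk :: "real \<Rightarrow> nat \<Rightarrow> nat" where
  "blk \<delta> n = nat \<lceil>2 * \<delta> * real n\<rceil>"

definition nblocks :: "nat \<Rightarrow> nat \<Rightarrow> nat" where
  "nblocks k m = (m + k - 1) div k"

definition block :: "nat \<Rightarrow> pt list \<Rightarrow> nat \<Rightarrow> pt set" where
  "block k L j = {L ! i | i. i < length L \<and> j * k \<le> i \<and> i < (j + 1) * k}"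

definition sector :: "pt set \<Rightarrow> pt \<Rightarrow> nat \<Rightarrow> pt list \<Rightarrow> nat \<Rightarrow> pt set" where
  "sector P p k L j =
     (let z = nblocks k (length L) in
      if 3 \<le> z then block k L j \<union> block k L ((j + 1) mod z) \<union> block k L ((j + 2) mod z)
      else P - {p})"

definition sector_indices :: "nat \<Rightarrow> pt list \<Rightarrow> nat set" where
  "sector_indices k L = (let z = nblocks k (length L) in if 3 \<le> z then {..<z} else {0})"

definition cell :: "pt set \<Rightarrow> (pt \<Rightarrow> 'c) \<Rightarrow> pt \<Rightarrow> pt set" where
  "cell P \<mu> p = {q \<in> P. \<mu> q = \<mu> p}"

definition rich_sector :: "pt set \<Rightarrow> (pt \<Rightarrow> 'c) \<Rightarrow> nat \<Rightarrow> real \<Rightarrow> pt \<Rightarrow> pt set \<Rightarrow> bool" where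
  "rich_sector P \<mu> n \<epsilon> p W \<longleftrightarrow> real (card (W \<inter> (cell P \<mu> p - {p}))) \<ge> \<epsilon> * real n / 10"

definition in_rich_sector :: "pt set \<Rightarrow> (pt \<Rightarrow> 'c) \<Rightarrow> nat \<Rightarrow> real \<Rightarrow> real \<Rightarrow> (pt \<Rightarrow> pt list) \<Rightarrow> pt \<Rightarrow> pt \<Rightarrow> bool" where
  "in_rich_sector P \<mu> n \<delta> \<epsilon> L p q \<longleftrightarrow>
     (\<exists>j \<in> sector_indices (blk \<delta> n) (L p).
        rich_sector P \<mu> n \<epsilon> p (sector P p (blk \<delta> n) (L p) j) \<and> q \<in> sector P p (blk \<delta> n) (L p) j)"

definition Pi_pairs :: "pt set \<Rightarrow> (pt \<Rightarrow> 'c) \<Rightarrow> nat \<Rightarrow> real \<Rightarrow> real \<Rightarrow> (pt \<Rightarrow> pt list) \<Rightarrow> pt set set" where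
  "Pi_pairs P \<mu> n \<delta> \<epsilon> L = {{p, q} | p q. p \<in> P \<and> q \<in> P \<and> p \<noteq> q \<and>
      (in_rich_sector P \<mu> n \<delta> \<epsilon> L p q \<or> in_rich_sector P \<mu> n \<delta> \<epsilon> L q p)}"

end

theory Submission
  imports Defs
begin

text \<open>
  Double counting. Each block of the angular order around p has at most \<open>k = \<lceil>2\<delta>n\<rceil>\<close> points
  and every point lies in exactly one block, hence in at most three sectors of p. Summing the
  number of points of the cell of p over all sectors of p therefore gives at most \<open>3n/r\<^sup>2\<close>,
  so p has at most \<open>30/(r\<^sup>2\<epsilon>)\<close> rich sectors, each of at most \<open>3k \<le> 9\<delta>n\<close> points. Hence
  at most \<open>270 \<delta>n/(r\<^sup>2\<epsilon>)\<close> points lie in rich sectors of p, and summing over the at most n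
  points p bounds the number of pairs.
\<close>

lemma mod_add_right_cancel_nat:
  assumes "(a + c) mod z = (b + c) mod (z::nat)" "a < z" "b < z"
  shows "a = b"
proof -
  have "(int a + int c) mod int z = (int b + int c) mod int z"
    using assms(1) by (metis of_nat_add of_nat_mod)
  then have "(int a + int c - int c) mod int z = (int b + int c - int c) mod int z"
    by (metis mod_diff_left_eq)
  then have "int a mod int z = int b mod int z" by simp
  then show ?thesis using assms(2,3) by (metis mod_less of_nat_mod of_nat_eq_iff)
qed

lemma block_subset_set: "block k L j \<subseteq> set L"
  unfolding block_def by auto

lemma card_block_le: "card (block k L j) \<le> k"
proof -
  have "block k L j \<subseteq> (\<lambda>i. L ! i) ` {j*k..<(j+1)*k}"
    unfolding block_def by auto
  then have "card (block k L j) \<le> card {j*k..<(j+1)*k}"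
    using card_mono[OF finite_imageI[OF finite_atLeastLessThan]] card_image_le[OF finite_atLeastLessThan]
    by (meson le_trans)
  then show ?thesis by simp
qed

lemma block_index_unique:
  assumes "distinct L" "x \<in> block k L a" "x \<in> block k L b"
  shows "a = b"
proof -
  obtain i where i: "x = L ! i" "i < length L" "a * k \<le> i" "i < (a+1)*k"
    using assms(2) unfolding block_def by auto
  obtain i' where i': "x = L ! i'" "i' < length L" "b * k \<le> i'" "i' < (b+1)*k"
    using assms(3) unfolding block_def by auto
  have "i = i'" using i i' assms(1) nth_eq_iff_index_eq by metis
  have "i div k = a" using i by (intro div_nat_eqI) (simp_all add: mult.commute)
  moreover have "i div k = b" using i' \<open>i = i'\<close> by (intro div_nat_eqI) (simp_all add: mult.commute)
  ultimately show ?thesis by simp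
qed

lemma card_rotated_blocks_containing_le_1:
  assumes "distinct L"
  shows "card {j\<in>{..<z}. x \<in> block k L ((j + c) mod z)} \<le> 1"
proof -
  have "a = b" if "a \<in> {j\<in>{..<z}. x \<in> block k L ((j + c) mod z)}"
    and "b \<in> {j\<in>{..<z}. x \<in> block k L ((j + c) mod z)}" for a b
  proof -
    have "(a + c) mod z = (b + c) mod z"
      using that block_index_unique[OF assms, of x k "(a + c) mod z" "(b + c) mod z"] by simp
    then show "a = b" using that by (intro mod_add_right_cancel_nat[of a c z b]) auto
  qed
  then show ?thesis by (simp add: card_le_Suc0_iff_eq)
qed

lemma card_sectors_containing_le_3:
  assumes "distinct L"
  shows "card {j\<in>sector_indices k L. x \<in> sector P p k L j} \<le> 3"
proof (cases "3 \<le> nblocks k (length L)")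
  case True
  define z where "z = nblocks k (length L)"
  let ?J = "\<lambda>c. {j\<in>{..<z}. x \<in> block k L ((j + c) mod z)}"
  have "{j\<in>sector_indices k L. x \<in> sector P p k L j} \<subseteq> ?J 0 \<union> ?J 1 \<union> ?J 2"
    using True unfolding sector_indices_def sector_def z_def[symmetric] Let_def by auto
  then have "card {j\<in>sector_indices k L. x \<in> sector P p k L j} \<le> card (?J 0 \<union> ?J 1 \<union> ?J 2)"
    by (intro card_mono) auto
  also have "\<dots> \<le> card (?J 0) + card (?J 1) + card (?J 2)"
    using card_Un_le[of "?J 0 \<union> ?J 1" "?J 2"] card_Un_le[of "?J 0" "?J 1"] by linarith
  also have "\<dots> \<le> 1 + 1 + 1"
    using card_rotated_blocks_containing_le_1[OF assms] by (meson add_le_mono)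
  finally show ?thesis by simp
next
  case False
  then have "sector_indices k L = {0}"
    unfolding sector_indices_def Let_def by simp
  then have "{j\<in>sector_indices k L. x \<in> sector P p k L j} \<subseteq> {0}"
    by auto
  then have "card {j\<in>sector_indices k L. x \<in> sector P p k L j} \<le> card {0::nat}"
    by (intro card_mono) auto
  then show ?thesis by simp
qed

lemma card_sector_le:
  assumes "set L = P - {p}" "distinct L" "k > 0"
  shows "card (sector P p k L j) \<le> 3 * k"
proof (cases "3 \<le> nblocks k (length L)")
  case True
  define z where "z = nblocks k (length L)"
  have "card (sector P p k L j)
      \<le> card (block k L j) + card (block k L ((j+1) mod z)) + card (block k L ((j+2) mod z))"
    using True card_Un_le[of "block k L j \<union> block k L ((j+1) mod z)" "block k L ((j+2) mod z)"]
       card_Un_le[of "block k L j" "block k L ((j+1) mod z)"]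
    unfolding sector_def z_def[symmetric] Let_def by simp
  also have "\<dots> \<le> k + k + k" using card_block_le by (meson add_le_mono)
  finally show ?thesis by simp
next
  case False
  then have "(length L + k - 1) div k < 3"
    unfolding nblocks_def by simp
  then have "length L + k - 1 < 3 * k"
    using assms(3) by (simp add: div_less_iff_less_mult mult.commute)
  moreover have "sector P p k L j = set L"
    using False assms(1) unfolding sector_def Let_def by simp
  ultimately show ?thesis using card_length[of L] by simp
qed

lemma sector_subset:
  assumes "set L = P - {p}"
  shows "sector P p k L j \<subseteq> P"
  using assms block_subset_set[of k L] unfolding sector_def Let_def by auto

lemma sum_card_inter_eq_sum_card_containing:
  assumes "finite J" "finite C"
  shows "(\<Sum>j\<in>J. card (W j \<inter> C)) = (\<Sum>x\<in>C. card {j\<in>J. x \<in> W j})"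
proof -
  have "(\<Sum>j\<in>J. card (W j \<inter> C)) = (\<Sum>j\<in>J. \<Sum>x\<in>C. if x \<in> W j then 1 else 0)"
  proof (rule sum.cong)
    fix j
    have "W j \<inter> C = {x\<in>C. x \<in> W j}" by auto
    then show "card (W j \<inter> C) = (\<Sum>x\<in>C. if x \<in> W j then 1 else 0)"
      using sum.inter_filter[OF assms(2), of "\<lambda>_. 1::nat" "\<lambda>x. x \<in> W j"] by simp
  qed simp
  also have "\<dots> = (\<Sum>x\<in>C. \<Sum>j\<in>J. if x \<in> W j then 1 else 0)" by (rule sum.swap)
  also have "\<dots> = (\<Sum>x\<in>C. card {j\<in>J. x \<in> W j})"
    by (intro sum.cong) (simp_all add: sum.inter_filter[OF assms(1), symmetric])
  finally show ?thesis .
qed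

lemma card_rich_sectors_le:
  fixes \<mu> :: "pt \<Rightarrow> 'c"
  assumes "finite P" "distinct L"
  shows "real (card {j\<in>sector_indices k L. rich_sector P \<mu> n \<epsilon> p (sector P p k L j)}) * (\<epsilon> * real n / 10)
    \<le> 3 * real (card (cell P \<mu> p - {p}))"
proof -
  define J where "J = sector_indices k L"
  define W where "W j = sector P p k L j" for j
  define C where "C = cell P \<mu> p - {p}"
  define R where "R = {j\<in>J. rich_sector P \<mu> n \<epsilon> p (W j)}"
  have "finite J" unfolding J_def sector_indices_def Let_def by simp
  have "finite C" unfolding C_def cell_def using assms(1) by simp
  have "real (card R) * (\<epsilon> * real n / 10) \<le> (\<Sum>j\<in>R. real (card (W j \<inter> C)))"
    using sum_bounded_below[of R "\<epsilon> * real n / 10" "\<lambda>j. real (card (W j \<inter> C))"]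
    unfolding R_def rich_sector_def C_def by auto
  also have "\<dots> \<le> (\<Sum>j\<in>J. real (card (W j \<inter> C)))"
    using \<open>finite J\<close> unfolding R_def by (intro sum_mono2) auto
  also have "\<dots> = real (\<Sum>j\<in>J. card (W j \<inter> C))"
    by simp
  also have "\<dots> = real (\<Sum>x\<in>C. card {j\<in>J. x \<in> W j})"
    by (simp only: sum_card_inter_eq_sum_card_containing[OF \<open>finite J\<close> \<open>finite C\<close>])
  also have "\<dots> \<le> real (\<Sum>x\<in>C. 3)"
    using card_sectors_containing_le_3[OF assms(2)] unfolding J_def W_def
    by (intro of_nat_mono sum_mono) auto
  finally show ?thesis unfolding R_def J_def W_def C_def by simp
qed

lemma card_points_in_rich_sectors_le:
  assumes "set L = P - {p}" "distinct L" "k > 0"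
  shows "card {q. \<exists>j\<in>sector_indices k L. rich_sector P \<mu> n \<epsilon> p (sector P p k L j) \<and> q \<in> sector P p k L j}
    \<le> 3 * k * card {j\<in>sector_indices k L. rich_sector P \<mu> n \<epsilon> p (sector P p k L j)}"
proof -
  define R where "R = {j\<in>sector_indices k L. rich_sector P \<mu> n \<epsilon> p (sector P p k L j)}"
  have "finite R" unfolding R_def sector_indices_def Let_def by simp
  have "{q. \<exists>j\<in>sector_indices k L. rich_sector P \<mu> n \<epsilon> p (sector P p k L j) \<and> q \<in> sector P p k L j}
      = (\<Union>j\<in>R. sector P p k L j)"
    unfolding R_def by auto
  also have "card \<dots> \<le> (\<Sum>j\<in>R. card (sector P p k L j))"
    by (rule card_UN_le[OF \<open>finite R\<close>])
  also have "\<dots> \<le> (\<Sum>j\<in>R. 3 * k)"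
    using card_sector_le[OF assms] by (intro sum_mono) auto
  finally show ?thesis unfolding R_def by (simp add: mult.commute)
qed

lemma card_points_in_rich_sectors_bound:
  fixes \<mu> :: "pt \<Rightarrow> 'c"
  assumes "finite P" "set L = P - {p}" "distinct L" "k > 0" "real k \<le> 3 * \<delta> * real n"
    and "real (card (cell P \<mu> p)) \<le> real n / r^2" "n > 0" "r \<noteq> 0" "\<epsilon> > 0"
  shows "real (card {q. \<exists>j\<in>sector_indices k L. rich_sector P \<mu> n \<epsilon> p (sector P p k L j) \<and> q \<in> sector P p k L j})
    \<le> 270 * \<delta> * real n / (r^2 * \<epsilon>)"
proof -
  define R where "R = real (card {j\<in>sector_indices k L. rich_sector P \<mu> n \<epsilon> p (sector P p k L j)})"
  have "card (cell P \<mu> p - {p}) \<le> card (cell P \<mu> p)"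
    using assms(1) unfolding cell_def by (intro card_mono) auto
  then have "R * (\<epsilon> * real n / 10) \<le> 3 * (real n / r^2)"
    using card_rich_sectors_le[OF assms(1,3), of k \<mu> n \<epsilon> p] assms(6) unfolding R_def by linarith
  then have R_le: "R \<le> 30 / (r^2 * \<epsilon>)"
    using assms(7-9) by (simp add: field_simps)
  have "real (card {q. \<exists>j\<in>sector_indices k L. rich_sector P \<mu> n \<epsilon> p (sector P p k L j) \<and> q \<in> sector P p k L j})
      \<le> real (3 * k * card {j\<in>sector_indices k L. rich_sector P \<mu> n \<epsilon> p (sector P p k L j)})"
    by (rule of_nat_mono[OF card_points_in_rich_sectors_le[OF assms(2-4)]])
  also have "\<dots> = 3 * real k * R"
    unfolding R_def by simp
  also have "\<dots> \<le> 3 * (3 * \<delta> * real n) * (30 / (r^2 * \<epsilon>))"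
    using assms(5) R_le by (intro mult_mono) (auto simp: R_def)
  also have "\<dots> = 270 * \<delta> * real n / (r^2 * \<epsilon>)" by simp
  finally show ?thesis .
qed

lemma card_symmetric_pairs_le_sum:
  assumes "finite P" "\<And>p. p \<in> P \<Longrightarrow> finite {q. R p q}"
  shows "card {{p, q} | p q. p \<in> P \<and> q \<in> P \<and> p \<noteq> q \<and> (R p q \<or> R q p)} \<le> (\<Sum>p\<in>P. card {q. R p q})"
proof -
  have fin: "finite (SIGMA p:P. {q. R p q})"
    using assms by (rule finite_SigmaI)
  have "{{p, q} | p q. p \<in> P \<and> q \<in> P \<and> p \<noteq> q \<and> (R p q \<or> R q p)}
      \<subseteq> (\<lambda>(p, q). {p, q}) ` (SIGMA p:P. {q. R p q})"
    by (auto simp: insert_commute)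
  then have "card {{p, q} | p q. p \<in> P \<and> q \<in> P \<and> p \<noteq> q \<and> (R p q \<or> R q p)}
      \<le> card ((\<lambda>(p, q). {p, q}) ` (SIGMA p:P. {q. R p q}))"
    using fin by (intro card_mono) auto
  also have "\<dots> \<le> card (SIGMA p:P. {q. R p q})"
    using fin by (rule card_image_le)
  also have "\<dots> = (\<Sum>p\<in>P. card {q. R p q})"
    using assms by (intro card_SigmaI) auto
  finally show ?thesis .
qed

lemma blk_bounds:
  assumes "\<delta> * real n \<ge> 1"
  shows "blk \<delta> n > 0" "real (blk \<delta> n) \<le> 3 * \<delta> * real n"
proof -
  have "2 * \<delta> * real n \<le> of_int \<lceil>2 * \<delta> * real n\<rceil>" "of_int \<lceil>2 * \<delta> * real n\<rceil> < 2 * \<delta> * real n + 1"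
    by linarith+
  with assms show "blk \<delta> n > 0" "real (blk \<delta> n) \<le> 3 * \<delta> * real n"
    unfolding blk_def by linarith+
qed

theorem mainTheorem7:
  "\<exists>C::real. C > 0 \<and>
    (\<forall>(n::nat) (r::real) (\<delta>::real) (\<epsilon>::real) (P::pt set) (\<mu>::pt \<Rightarrow> nat) (L::pt \<Rightarrow> pt list).
      n \<ge> 1 \<longrightarrow> r \<ge> 1 \<longrightarrow> \<delta> > 0 \<longrightarrow> \<delta> * real n \<ge> 1 \<longrightarrow> \<epsilon> > 0 \<longrightarrow>
      finite P \<longrightarrow> card P \<le> n \<longrightarrow> general_position P \<longrightarrow>
      (\<forall>p\<in>P. real (card (cell P \<mu> p)) \<le> real n / r^2) \<longrightarrow>
      (\<forall>p\<in>P. clockwise_list P p (L p)) \<longrightarrow>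
      real (card (Pi_pairs P \<mu> n \<delta> \<epsilon> L)) \<le> C * \<delta> * (real n)^2 / (r^2 * \<epsilon>))"
proof (intro exI[of _ 270] conjI allI impI)
  fix n :: nat and r \<delta> \<epsilon> :: real and P :: "pt set" and \<mu> :: "pt \<Rightarrow> nat" and L :: "pt \<Rightarrow> pt list"
  assume "n \<ge> 1" "r \<ge> 1" "\<delta> > 0" "\<delta> * real n \<ge> 1" "\<epsilon> > 0" "finite P" "card P \<le> n"
    and cell_le: "\<forall>p\<in>P. real (card (cell P \<mu> p)) \<le> real n / r^2"
    and clockwise: "\<forall>p\<in>P. clockwise_list P p (L p)"
  define B where "B = 270 * \<delta> * real n / (r^2 * \<epsilon>)"
  have L: "set (L p) = P - {p}" "distinct (L p)" if "p \<in> P" for p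
    using clockwise that unfolding clockwise_list_def by auto
  have "{q. in_rich_sector P \<mu> n \<delta> \<epsilon> L p q} \<subseteq> P" if "p \<in> P" for p
    using sector_subset[OF L(1)[OF that]] unfolding in_rich_sector_def by blast
  then have "finite {q. in_rich_sector P \<mu> n \<delta> \<epsilon> L p q}" if "p \<in> P" for p
    using that \<open>finite P\<close> by (meson finite_subset)
  then have "real (card (Pi_pairs P \<mu> n \<delta> \<epsilon> L)) \<le> (\<Sum>p\<in>P. real (card {q. in_rich_sector P \<mu> n \<delta> \<epsilon> L p q}))"
    unfolding Pi_pairs_def of_nat_sum[symmetric]
    by (intro of_nat_mono card_symmetric_pairs_le_sum \<open>finite P\<close>)
  also have "\<dots> \<le> (\<Sum>p\<in>P. B)"
    using blk_bounds[OF \<open>\<delta> * real n \<ge> 1\<close>] cell_le \<open>n \<ge> 1\<close> \<open>r \<ge> 1\<close> \<open>\<epsilon> > 0\<close> L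
    unfolding in_rich_sector_def B_def
    by (intro sum_mono card_points_in_rich_sectors_bound[OF \<open>finite P\<close>]) auto
  also have "\<dots> = real (card P) * B"
    by simp
  also have "\<dots> \<le> real n * B"
    using \<open>card P \<le> n\<close> \<open>\<delta> > 0\<close> \<open>\<epsilon> > 0\<close> by (intro mult_right_mono) (auto simp: B_def)
  finally show "real (card (Pi_pairs P \<mu> n \<delta> \<epsilon> L)) \<le> 270 * \<delta> * (real n)^2 / (r^2 * \<epsilon>)"
    unfolding B_def by (simp add: power2_eq_square mult_ac)
qed (simp)

end
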